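(* Let $Q\ge1$ and $\Omega_Q=\{(x,y)\in\mathbb R^2:\ x>0,\ y>0,\ xy\le Q\}$. Let $\mathcal B(x,y)=4Q^{1/2}(xy)^{1/2}-xy$ and, for $X_0\in\Omega_Q$, $\mathcal B_{X_0}(X)=\mathcal B(X)-\mathcal B'(X_0)(X-X_0)$, where $\mathcal B'(X_0)$ is the gradient of $\mathcal B$ at $X_0$. Then (1) $0\le\mathcal B(X)\le 4Q$ for all $X\in\Omega_Q$; (2) for all $X_0=(x_0,y_0)$, $X=(x,y)$ in $\Omega_Q$, $$\mathcal B_{X_0}(X_0)-\mathcal B_{X_0}(X)\ge c\,|x-x_0|\cdot|y-y_0|,$$ where $c$ is an absolute constant. *)

theory Defs
  imports "HOL-Analysis.Analysis"
begin

definition OmegaQ :: "real \<Rightarrow> (real \<times> real) set" where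
  "OmegaQ Q = {(x, y). x > 0 \<and> y > 0 \<and> x * y \<le> Q}"

definition Bell :: "real \<Rightarrow> real \<times> real \<Rightarrow> real" where
  "Bell Q X = 4 * sqrt Q * sqrt (fst X * snd X) - fst X * snd X"

definition Bshift :: "real \<Rightarrow> real \<times> real \<Rightarrow> real \<times> real \<Rightarrow> real" where
  "Bshift Q X0 X = Bell Q X - frechet_derivative (Bell Q) (at X0) (X - X0)"

end

theory Submission
  imports Defs
begin

text \<open>
  Write \<open>s = sqrt (x*y)\<close>, \<open>s\<^sub>0 = sqrt (x\<^sub>0*y\<^sub>0)\<close>, \<open>q = sqrt Q\<close>, \<open>a = x - x\<^sub>0\<close>, \<open>b = y - y\<^sub>0\<close>.
  Then \<open>Bell Q (x, y) = 4*q*s - s\<^sup>2\<close>, which gives the bounds since \<open>0 \<le> s \<le> q\<close>, and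
  a direct computation shows that \<open>s\<^sub>0\<close> times the gap \<open>B\<^sub>X\<^sub>0(X\<^sub>0) - B\<^sub>X\<^sub>0(X)\<close> equals
  \<open>2*q*(s - s\<^sub>0)\<^sup>2 - (2*q - s\<^sub>0)*a*b\<close>.
  If \<open>a*b \<le> 0\<close> this is at least \<open>s\<^sub>0*\<bar>a*b\<bar>\<close> because \<open>2*q - s\<^sub>0 \<ge> s\<^sub>0\<close>; if \<open>a*b > 0\<close>
  the Cauchy--Schwarz type estimate \<open>(s - s\<^sub>0)\<^sup>2 \<ge> a*b\<close> gives the same bound.
  Hence the theorem holds with \<open>c = 1\<close>.
\<close>

lemma sqrt_mult_add_ge:
  fixes x y u v :: real
  assumes "0 \<le> x" "0 \<le> y" "0 \<le> u" "0 \<le> v"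
  shows "sqrt (x * y) + sqrt (u * v) \<le> sqrt ((x + u) * (y + v))"
proof (rule real_le_rsqrt)
  have "sqrt (x * y) * sqrt (u * v) = sqrt ((x * v) * (u * y))"
    by (simp add: real_sqrt_mult[symmetric] ac_simps)
  also have "\<dots> \<le> (x * v + u * y) / 2"
    using assms by (intro arith_geo_mean_sqrt) auto
  finally show "(sqrt (x * y) + sqrt (u * v))\<^sup>2 \<le> (x + u) * (y + v)"
    using assms by (simp add: power2_sum algebra_simps)
qed

lemma sqrt_mult_diff_sq_ge:
  fixes x y x0 y0 :: real
  assumes "0 \<le> x" "0 \<le> y" "0 \<le> x0" "0 \<le> y0" "0 \<le> (x - x0) * (y - y0)"
  shows "(x - x0) * (y - y0) \<le> (sqrt (x * y) - sqrt (x0 * y0))\<^sup>2"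
proof -
  have ordered: "(x' - x) * (y' - y) \<le> (sqrt (x' * y') - sqrt (x * y))\<^sup>2"
    if "0 \<le> x" "0 \<le> y" "x \<le> x'" "y \<le> y'" for x y x' y' :: real
  proof -
    have "sqrt (x * y) + sqrt ((x' - x) * (y' - y)) \<le> sqrt (x' * y')"
      using sqrt_mult_add_ge[of x y "x' - x" "y' - y"] that by simp
    then have "sqrt ((x' - x) * (y' - y)) \<le> sqrt (x' * y') - sqrt (x * y)"
      by simp
    then have "(sqrt ((x' - x) * (y' - y)))\<^sup>2 \<le> (sqrt (x' * y') - sqrt (x * y))\<^sup>2"
      using that by (intro power_mono) auto
    then show ?thesis
      using that by simp
  qed
  from assms(5) consider "x0 \<le> x" "y0 \<le> y" | "x \<le> x0" "y \<le> y0"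
    by (auto simp: zero_le_mult_iff)
  then show ?thesis
  proof cases
    case 1
    then show ?thesis using ordered assms by blast
  next
    case 2
    then show ?thesis
      using ordered[of x y x0 y0] assms by (simp add: power2_commute algebra_simps)
  qed
qed

lemma Bell_has_derivative:
  assumes "0 < x0" "0 < y0"
  shows "(Bell Q has_derivative
           (\<lambda>h. (2 * sqrt Q / sqrt (x0 * y0) - 1) * (y0 * fst h + x0 * snd h))) (at (x0, y0))"
  unfolding Bell_def using assms
  by (auto intro!: derivative_eq_intros simp: fun_eq_iff field_simps)

lemma frechet_derivative_Bell:
  assumes "0 < x0" "0 < y0"
  shows "frechet_derivative (Bell Q) (at (x0, y0)) =
           (\<lambda>h. (2 * sqrt Q / sqrt (x0 * y0) - 1) * (y0 * fst h + x0 * snd h))"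
  using frechet_derivative_at[OF Bell_has_derivative[OF assms]] by simp

lemma OmegaQ_D:
  assumes "(x, y) \<in> OmegaQ Q"
  shows "0 < x" "0 < y" "0 < Q" "0 < sqrt (x * y)" "sqrt (x * y) \<le> sqrt Q"
  using assms by (auto simp: OmegaQ_def intro: less_le_trans[OF mult_pos_pos])

lemma Bell_nonneg:
  assumes "X \<in> OmegaQ Q"
  shows "0 \<le> Bell Q X"
proof -
  obtain x y where X: "X = (x, y)" by fastforce
  note s = OmegaQ_D[OF assms[unfolded X]]
  have "0 \<le> sqrt (x * y) * (4 * sqrt Q - sqrt (x * y))"
    using s(4,5) by (intro mult_nonneg_nonneg) linarith+
  then show ?thesis
    using s by (simp add: X Bell_def algebra_simps)
qed

lemma Bell_le:
  assumes "X \<in> OmegaQ Q"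
  shows "Bell Q X \<le> 4 * Q"
proof -
  obtain x y where X: "X = (x, y)" by fastforce
  note s = OmegaQ_D[OF assms[unfolded X]]
  have "0 \<le> Q" "0 \<le> x * y"
    using s(1-3) by simp_all
  then have "Bell Q X = 4 * Q - (2 * sqrt Q - sqrt (x * y))\<^sup>2"
    by (simp add: X Bell_def power2_diff power_mult_distrib)
  then show ?thesis
    by simp
qed

lemma Bshift_gap_eq:
  assumes "0 < x0" "0 < y0" "0 \<le> x" "0 \<le> y"
  shows "sqrt (x0 * y0) * (Bshift Q (x0, y0) (x0, y0) - Bshift Q (x0, y0) (x, y)) =
           2 * sqrt Q * (sqrt (x * y) - sqrt (x0 * y0))\<^sup>2
           - (2 * sqrt Q - sqrt (x0 * y0)) * ((x - x0) * (y - y0))"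
proof -
  define s s0 q where "s = sqrt (x * y)" and "s0 = sqrt (x0 * y0)" and "q = sqrt Q"
  have "0 < s0" "s\<^sup>2 = x * y" "s0\<^sup>2 = x0 * y0"
    using assms by (simp_all add: s_def s0_def)
  have "Bshift Q (x0, y0) (x0, y0) - Bshift Q (x0, y0) (x, y)
          = (4 * q * s0 - x0 * y0) - (4 * q * s - x * y)
            + (2 * q / s0 - 1) * (y0 * (x - x0) + x0 * (y - y0))"
    using assms by (simp add: Bshift_def Bell_def frechet_derivative_Bell s_def s0_def q_def)
  also have "\<dots> = (4 * q * s0 - s0\<^sup>2) - (4 * q * s - s\<^sup>2)
                   + (2 * q / s0 - 1) * (s\<^sup>2 - s0\<^sup>2 - (x - x0) * (y - y0))"
    using \<open>s\<^sup>2 = x * y\<close> \<open>s0\<^sup>2 = x0 * y0\<close> by (simp add: algebra_simps)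
  finally show ?thesis
    using \<open>0 < s0\<close>
    by (simp add: s_def[symmetric] s0_def[symmetric] q_def[symmetric] field_simps power2_eq_square)
qed

lemma Bshift_gap_ge:
  assumes "X0 \<in> OmegaQ Q" "X \<in> OmegaQ Q"
  shows "\<bar>fst X - fst X0\<bar> * \<bar>snd X - snd X0\<bar> \<le> Bshift Q X0 X0 - Bshift Q X0 X"
proof -
  obtain x0 y0 x y where X0: "X0 = (x0, y0)" and X: "X = (x, y)" by fastforce
  note p0 = OmegaQ_D[OF assms(1)[unfolded X0]] and p = OmegaQ_D[OF assms(2)[unfolded X]]
  define s s0 q ab where "s = sqrt (x * y)" and "s0 = sqrt (x0 * y0)" and "q = sqrt Q"
    and "ab = (x - x0) * (y - y0)"
  have "s0 * \<bar>ab\<bar> \<le> 2 * q * (s - s0)\<^sup>2 - (2 * q - s0) * ab"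
  proof (cases "ab \<le> 0")
    case True
    have "s0 * (- ab) \<le> (2 * q - s0) * (- ab)"
      using True p0(5) by (intro mult_right_mono) (simp_all add: s0_def q_def)
    moreover have "0 \<le> 2 * q * (s - s0)\<^sup>2"
      using p0(3) by (simp add: q_def)
    ultimately show ?thesis
      using True by (simp add: algebra_simps)
  next
    case False
    have "ab \<le> (s - s0)\<^sup>2"
      using sqrt_mult_diff_sq_ge[of x y x0 y0] p(1,2) p0(1,2) False
      by (simp add: s_def s0_def ab_def)
    then have "2 * q * ab \<le> 2 * q * (s - s0)\<^sup>2"
      using p0(3) by (intro mult_left_mono) (simp_all add: q_def)
    then show ?thesis
      using False by (simp add: algebra_simps)
  qed
  also have "\<dots> = s0 * (Bshift Q X0 X0 - Bshift Q X0 X)"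
    using Bshift_gap_eq[of x0 y0 x y Q] p(1,2) p0(1,2)
    by (simp add: X0 X s_def s0_def q_def ab_def)
  finally show ?thesis
    using p0(4) by (simp add: X0 X ab_def abs_mult s0_def)
qed

theorem lemma5p2:
  shows "(\<forall>Q \<ge> 1. \<forall>X \<in> OmegaQ Q. 0 \<le> Bell Q X \<and> Bell Q X \<le> 4 * Q) \<and>
         (\<exists>c > 0. \<forall>Q \<ge> 1. \<forall>X0 \<in> OmegaQ Q. \<forall>X \<in> OmegaQ Q.
            Bshift Q X0 X0 - Bshift Q X0 X \<ge> c * \<bar>fst X - fst X0\<bar> * \<bar>snd X - snd X0\<bar>)"
proof
  show "\<forall>Q \<ge> 1. \<forall>X \<in> OmegaQ Q. 0 \<le> Bell Q X \<and> Bell Q X \<le> 4 * Q"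
    using Bell_nonneg Bell_le by blast
  show "\<exists>c > 0. \<forall>Q \<ge> 1. \<forall>X0 \<in> OmegaQ Q. \<forall>X \<in> OmegaQ Q.
          Bshift Q X0 X0 - Bshift Q X0 X \<ge> c * \<bar>fst X - fst X0\<bar> * \<bar>snd X - snd X0\<bar>"
    using Bshift_gap_ge by (intro exI[of _ 1]) simp
qed

end
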